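(* Let $(E,\mathcal{P})$ be a random locally convex module over $K$ with base $(\Omega,\mathcal{F},P)$, endowed with its $(\varepsilon,\lambda)$-topology, and let $G$ be a nonempty $L^0$-convex subset of $E$. If $G$ is $L^0$-convexly compact, then $G$ has the countable concatenation property: for every sequence $\{g_n\}_{n\in\mathbb{N}}$ in $G$ and every countable partition $\{A_n\}_{n\in\mathbb{N}}$ of $\Omega$ into sets in $\mathcal{F}$, there exists $g\in G$ with $\tilde I_{A_n}g=\tilde I_{A_n}g_n$ for all $n$.
   Context: $(\Omega,\mathcal{F},P)$ is a probability space, $K=\mathbb{R}$ or $\mathbb{C}$, $L^0(\mathcal{F},K)$ is the algebra of equivalence classes (modulo $P$-a.s. equality) of $K$-valued $\mathcal{F}$-measurable random variables, $L^0=L^0(\mathcal{F},\mathbb{R})$, $L^0_+=\{\xi\in L^0:\xi\ge0\}$; $\tilde I_A$ denotes the class of the indicator of $A\in\mathcal{F}$. An $L^0$-seminorm on an $L^0(\mathcal{F},K)$-module $E$ is a map $\|\cdot\|:E\to L^0_+$ with $\|\xi x\|=|\xi|\|x\|$ and $\|x+y\|\le\|x\|+\|y\|$. A random locally convex module $(E,\mathcal{P})$ is an $L^0(\mathcal{F},K)$-module $E$ with a family $\mathcal{P}$ of $L^0$-seminorms such that $\bigvee\{\|x\|:\|\cdot\|\in\mathcal{P}\}=0$ iff $x=\theta$. For finite nonempty $\mathcal{Q}\subset\mathcal{P}$ let $\|x\|_{\mathcal{Q}}=\bigvee_{\|\cdot\|\in\mathcal{Q}}\|x\|$; the $(\varepsilon,\lambda)$-topology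 on $E$ has local base at $\theta$ the sets $\{x: P\{\|x\|_{\mathcal{Q}}<\varepsilon\}>1-\lambda\}$ ($\mathcal{Q}$ finite nonempty, $\varepsilon>0$, $0<\lambda<1$). $G\subset E$ is $L^0$-convex if $\xi x+(1-\xi)y\in G$ for all $x,y\in G$, $\xi\in L^0$, $0\le\xi\le1$. An $L^0$-convex set $G$ is $L^0$-convexly compact if every family of $L^0$-convex subsets of $G$ which are closed (in the relative topology of $G$) and which has the finite intersection property has nonempty intersection. *)

theory Defs
  imports "HOL-Probability.Probability"
begin

text \<open>
  Elements of \<open>L\<^sup>0(\<F>,K)\<close> are represented by \<open>\<F>\<close>-measurable functions \<open>\<xi> :: 'a \<Rightarrow> 'k\<close>;
  the scalar action \<open>act\<close> of \<open>L\<^sup>0(\<F>,K)\<close> on the module \<open>E\<close> (the type \<open>'e\<close>) is required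
  to depend only on the a.s.-class of \<open>\<xi>\<close>.  An \<open>L\<^sup>0\<close>-seminorm is represented by
  \<open>N :: 'e \<Rightarrow> 'a \<Rightarrow> real\<close>, with \<open>N x\<close> a measurable representative of its \<open>L\<^sup>0\<^sub>+\<close> value,
  so all (in)equalities between elements of \<open>L\<^sup>0\<close> hold almost surely.
\<close>

definition L0_module ::
  "'a measure \<Rightarrow> (('a \<Rightarrow> 'k::real_normed_field) \<Rightarrow> 'e::ab_group_add \<Rightarrow> 'e) \<Rightarrow> bool" where
  "L0_module M act \<longleftrightarrow>
     (\<forall>\<xi> \<eta> x. \<xi> \<in> borel_measurable M \<longrightarrow> \<eta> \<in> borel_measurable M \<longrightarrow>
         (AE \<omega> in M. \<xi> \<omega> = \<eta> \<omega>) \<longrightarrow> act \<xi> x = act \<eta> x) \<and>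
     (\<forall>\<xi> x y. \<xi> \<in> borel_measurable M \<longrightarrow> act \<xi> (x + y) = act \<xi> x + act \<xi> y) \<and>
     (\<forall>\<xi> \<eta> x. \<xi> \<in> borel_measurable M \<longrightarrow> \<eta> \<in> borel_measurable M \<longrightarrow>
         act (\<lambda>\<omega>. \<xi> \<omega> + \<eta> \<omega>) x = act \<xi> x + act \<eta> x) \<and>
     (\<forall>\<xi> \<eta> x. \<xi> \<in> borel_measurable M \<longrightarrow> \<eta> \<in> borel_measurable M \<longrightarrow>
         act (\<lambda>\<omega>. \<xi> \<omega> * \<eta> \<omega>) x = act \<xi> (act \<eta> x)) \<and>
     (\<forall>x. act (\<lambda>\<omega>. 1) x = x)"

definition L0_seminorm ::
  "'a measure \<Rightarrow> (('a \<Rightarrow> 'k::real_normed_field) \<Rightarrow> 'e::ab_group_add \<Rightarrow> 'e) \<Rightarrow> ('e \<Rightarrow> 'a \<Rightarrow> real) \<Rightarrow> bool" where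
  "L0_seminorm M act N \<longleftrightarrow>
     (\<forall>x. N x \<in> borel_measurable M \<and> (AE \<omega> in M. 0 \<le> N x \<omega>)) \<and>
     (\<forall>\<xi> x. \<xi> \<in> borel_measurable M \<longrightarrow>
         (AE \<omega> in M. N (act \<xi> x) \<omega> = norm (\<xi> \<omega>) * N x \<omega>)) \<and>
     (\<forall>x y. AE \<omega> in M. N (x + y) \<omega> \<le> N x \<omega> + N y \<omega>)"

text \<open>The condition
  \<open>\<Or>{\<parallel>x\<parallel> : \<parallel>\<cdot>\<parallel>\<in>\<P>} = 0 iff x = \<theta>\<close> is written out: the supremum in \<open>L\<^sup>0\<close> of a
  family of nonnegative elements is \<open>0\<close> iff each member is \<open>0\<close> a.s.\<close>
definition RLC_module ::
  "'a measure \<Rightarrow> (('a \<Rightarrow> 'k::real_normed_field) \<Rightarrow> 'e::ab_group_add \<Rightarrow> 'e) \<Rightarrow> ('e \<Rightarrow> 'a \<Rightarrow> real) set \<Rightarrow> bool" where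
  "RLC_module M act Ps \<longleftrightarrow>
     prob_space M \<and> L0_module M act \<and> (\<forall>N\<in>Ps. L0_seminorm M act N) \<and>
     (\<forall>x. (\<forall>N\<in>Ps. AE \<omega> in M. N x \<omega> = 0) \<longleftrightarrow> x = 0)"

definition seminorm_max :: "('e \<Rightarrow> 'a \<Rightarrow> real) set \<Rightarrow> 'e \<Rightarrow> 'a \<Rightarrow> real" where
  "seminorm_max Q x = (\<lambda>\<omega>. Max ((\<lambda>N. N x \<omega>) ` Q))"

definition eps_lambda_nbhd ::
  "'a measure \<Rightarrow> ('e::ab_group_add \<Rightarrow> 'a \<Rightarrow> real) set \<Rightarrow> 'e \<Rightarrow> real \<Rightarrow> real \<Rightarrow> 'e set" where
  "eps_lambda_nbhd M Q x \<epsilon> lam =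
     {y. measure M {\<omega> \<in> space M. seminorm_max Q (y - x) \<omega> < \<epsilon>} > 1 - lam}"

definition eps_lambda_topology ::
  "'a measure \<Rightarrow> ('e::ab_group_add \<Rightarrow> 'a \<Rightarrow> real) set \<Rightarrow> 'e topology" where
  "eps_lambda_topology M Ps = topology (\<lambda>S. \<forall>x\<in>S. \<exists>Q \<epsilon> lam.
      finite Q \<and> Q \<noteq> {} \<and> Q \<subseteq> Ps \<and> 0 < \<epsilon> \<and> 0 < lam \<and> lam < 1 \<and>
      eps_lambda_nbhd M Q x \<epsilon> lam \<subseteq> S)"

definition L0_convex ::
  "'a measure \<Rightarrow> (('a \<Rightarrow> 'k::real_normed_field) \<Rightarrow> 'e::ab_group_add \<Rightarrow> 'e) \<Rightarrow> 'e set \<Rightarrow> bool" where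
  "L0_convex M act G \<longleftrightarrow>
     (\<forall>x\<in>G. \<forall>y\<in>G. \<forall>\<xi>::'a \<Rightarrow> real. \<xi> \<in> borel_measurable M \<longrightarrow>
        (AE \<omega> in M. 0 \<le> \<xi> \<omega> \<and> \<xi> \<omega> \<le> 1) \<longrightarrow>
        act (\<lambda>\<omega>. of_real (\<xi> \<omega>)) x + act (\<lambda>\<omega>. of_real (1 - \<xi> \<omega>)) y \<in> G)"

definition L0_convexly_compact ::
  "'a measure \<Rightarrow> (('a \<Rightarrow> 'k::real_normed_field) \<Rightarrow> 'e::ab_group_add \<Rightarrow> 'e) \<Rightarrow> 'e topology \<Rightarrow> 'e set \<Rightarrow> bool" where
  "L0_convexly_compact M act T G \<longleftrightarrow>
     L0_convex M act G \<and>
     (\<forall>\<F>. (\<forall>C\<in>\<F>. C \<subseteq> G \<and> L0_convex M act C \<and> closedin (subtopology T G) C) \<longrightarrow>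
          (\<forall>\<F>'. \<F>' \<subseteq> \<F> \<longrightarrow> finite \<F>' \<longrightarrow> \<F>' \<noteq> {} \<longrightarrow> \<Inter>\<F>' \<noteq> {}) \<longrightarrow>
          \<Inter>\<F> \<noteq> {})"

definition countable_concatenation_property ::
  "'a measure \<Rightarrow> (('a \<Rightarrow> 'k::real_normed_field) \<Rightarrow> 'e::ab_group_add \<Rightarrow> 'e) \<Rightarrow> 'e set \<Rightarrow> bool" where
  "countable_concatenation_property M act G \<longleftrightarrow>
     (\<forall>g :: nat \<Rightarrow> 'e. \<forall>A :: nat \<Rightarrow> 'a set.
        (\<forall>n. g n \<in> G) \<longrightarrow> (\<forall>n. A n \<in> sets M) \<longrightarrow> disjoint_family A \<longrightarrow>
        (\<Union>n. A n) = space M \<longrightarrow>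
        (\<exists>g0\<in>G. \<forall>n. act (indicator (A n)) g0 = act (indicator (A n)) (g n)))"

end

theory Submission
  imports Defs
begin

text \<open>For \<open>k \<in> \<nat>\<close> let \<open>C\<^sub>k\<close> be the set of \<open>x \<in> G\<close> with \<open>\<chi>\<^sub>A\<^sub>j x = \<chi>\<^sub>A\<^sub>j g\<^sub>j\<close> for all \<open>j \<le> k\<close>.
  Each condition \<open>\<chi>\<^sub>B x = \<chi>\<^sub>B c\<close> defines an \<open>L\<^sup>0\<close>-convex set (multiplication by \<open>\<chi>\<^sub>B\<close>
  commutes with \<open>L\<^sup>0\<close>-convex combinations) which is closed: if \<open>\<chi>\<^sub>B x \<noteq> \<chi>\<^sub>B c\<close>, some seminorm
  \<open>N\<close> exceeds a level \<open>\<delta> > 0\<close> at \<open>\<chi>\<^sub>B (c - x)\<close> with probability \<open>p > 0\<close>, and since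
  \<open>N (\<chi>\<^sub>B w) \<le> N w\<close> no \<open>y\<close> in the neighbourhood \<open>P{N (y - x) < \<delta>} > 1 - p/2\<close> can satisfy
  the condition.  Gluing \<open>g\<^sub>k\<^sub>+\<^sub>1\<close> on \<open>A\<^sub>k\<^sub>+\<^sub>1\<close> to an element of \<open>C\<^sub>k\<close> with the coefficient
  \<open>\<chi>\<^sub>A\<^sub>k\<^sub>+\<^sub>1\<close> shows that every \<open>C\<^sub>k\<close> is nonempty, so the decreasing family \<open>(C\<^sub>k)\<close> has the
  finite intersection property, and \<open>L\<^sup>0\<close>-convex compactness gives an element of all \<open>C\<^sub>k\<close>.\<close>

lemma borel_measurable_one_minus [measurable (raw)]:
  "\<xi> \<in> borel_measurable M \<Longrightarrow> (\<lambda>\<omega>. 1 - \<xi> \<omega> :: 'b::real_normed_algebra_1) \<in> borel_measurable M"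
  by (rule borel_measurable_continuous_on[where f = "\<lambda>t. 1 - t"]) (intro continuous_intros)

context
  fixes M :: "'a measure"
    and act :: "('a \<Rightarrow> 'k::real_normed_field) \<Rightarrow> 'e::ab_group_add \<Rightarrow> 'e"
  assumes module: "L0_module M act"
begin

lemma act_mult:
  "\<xi> \<in> borel_measurable M \<Longrightarrow> \<eta> \<in> borel_measurable M \<Longrightarrow>
    act \<xi> (act \<eta> x) = act (\<lambda>\<omega>. \<xi> \<omega> * \<eta> \<omega>) x"
  using module unfolding L0_module_def by metis

lemma act_commute:
  "\<xi> \<in> borel_measurable M \<Longrightarrow> \<eta> \<in> borel_measurable M \<Longrightarrow> act \<xi> (act \<eta> x) = act \<eta> (act \<xi> x)"
  by (simp add: act_mult mult.commute)

lemma act_add_right: "\<xi> \<in> borel_measurable M \<Longrightarrow> act \<xi> (x + y) = act \<xi> x + act \<xi> y"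
  using module unfolding L0_module_def by metis

lemma act_add_left:
  "\<xi> \<in> borel_measurable M \<Longrightarrow> \<eta> \<in> borel_measurable M \<Longrightarrow>
    act (\<lambda>\<omega>. \<xi> \<omega> + \<eta> \<omega>) x = act \<xi> x + act \<eta> x"
  using module unfolding L0_module_def by metis

lemma act_one: "act (\<lambda>\<omega>. 1) x = x"
  using module unfolding L0_module_def by metis

lemma act_zero: "act (\<lambda>\<omega>. 0) x = 0"
  using act_add_left[of "\<lambda>\<omega>. 0" "\<lambda>\<omega>. 0" x] by simp

lemma act_indicator_empty: "act (indicator {}) x = 0"
  unfolding indicator_def by (simp add: act_zero)

lemma act_diff_right: "\<xi> \<in> borel_measurable M \<Longrightarrow> act \<xi> (x - y) = act \<xi> x - act \<xi> y"
  using act_add_right[of \<xi> "x - y" y] by (simp add: algebra_simps)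

lemma act_complement:
  assumes "\<xi> \<in> borel_measurable M"
  shows "act \<xi> x + act (\<lambda>\<omega>. 1 - \<xi> \<omega>) x = x"
  using act_add_left[of \<xi> "\<lambda>\<omega>. 1 - \<xi> \<omega>" x] assms
  by (simp add: act_one borel_measurable_one_minus)

lemma act_indicator_concat:
  assumes "A \<in> sets M" "B \<in> sets M"
  shows "act (indicator B) (act (indicator A) u + act (\<lambda>\<omega>. 1 - indicator A \<omega>) v)
    = act (indicator (B \<inter> A)) u + act (indicator (B - A)) v"
proof -
  have "(\<lambda>\<omega>. indicator B \<omega> * indicator A \<omega>) = (indicator (B \<inter> A) :: 'a \<Rightarrow> 'k)"
    "(\<lambda>\<omega>. indicator B \<omega> * (1 - indicator A \<omega>)) = (indicator (B - A) :: 'a \<Rightarrow> 'k)"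
    by (auto simp: indicator_def)
  then show ?thesis
    using assms by (simp add: act_add_right act_mult borel_measurable_one_minus)
qed

lemma L0_convex_indicator_concat:
  assumes "L0_convex M act G" "x \<in> G" "y \<in> G" "A \<in> sets M"
  shows "act (indicator A) x + act (\<lambda>\<omega>. 1 - indicator A \<omega>) y \<in> G"
proof -
  have "act (\<lambda>\<omega>. of_real (indicator A \<omega> :: real)) x
      + act (\<lambda>\<omega>. of_real (1 - indicator A \<omega> :: real)) y \<in> G"
    using assms unfolding L0_convex_def by (auto simp: indicator_def)
  then show ?thesis
    by (simp add: of_real_indicator)
qed

lemma L0_convex_indicator_fiber:
  assumes "B \<in> sets M"
  shows "L0_convex M act {x. act (indicator B) x = act (indicator B) c}"
  unfolding L0_convex_def
proof (intro ballI allI impI)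
  fix x y and \<xi> :: "'a \<Rightarrow> real"
  assume x: "x \<in> {x. act (indicator B) x = act (indicator B) c}"
    and y: "y \<in> {x. act (indicator B) x = act (indicator B) c}"
    and \<xi>: "\<xi> \<in> borel_measurable M"
  have "act (indicator B) (act (\<lambda>\<omega>. of_real (\<xi> \<omega>)) x + act (\<lambda>\<omega>. 1 - of_real (\<xi> \<omega>)) y)
      = act (\<lambda>\<omega>. of_real (\<xi> \<omega>)) (act (indicator B) x)
        + act (\<lambda>\<omega>. 1 - of_real (\<xi> \<omega>)) (act (indicator B) y)"
    using assms \<xi> by (simp add: act_add_right act_commute borel_measurable_one_minus)
  also have "\<dots> = act (indicator B) c"
    using x y \<xi> by (simp add: act_complement)
  finally show "act (\<lambda>\<omega>. of_real (\<xi> \<omega>)) x + act (\<lambda>\<omega>. of_real (1 - \<xi> \<omega>)) y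
      \<in> {x. act (indicator B) x = act (indicator B) c}"
    by simp
qed

lemma L0_convex_finite_concatenation:
  fixes k :: nat
  assumes G: "L0_convex M act G" and g: "\<forall>n. g n \<in> G"
    and A: "\<forall>n. A n \<in> sets M" and disj: "disjoint_family A"
  shows "\<exists>x\<in>G. \<forall>j\<le>k. act (indicator (A j)) x = act (indicator (A j)) (g j)"
proof (induction k)
  case 0
  then show ?case using g by auto
next
  case (Suc k)
  then obtain x where x: "x \<in> G" "\<forall>j\<le>k. act (indicator (A j)) x = act (indicator (A j)) (g j)"
    by blast
  define y where "y = act (indicator (A (Suc k))) (g (Suc k))
    + act (\<lambda>\<omega>. 1 - indicator (A (Suc k)) \<omega>) x"
  have "act (indicator (A j)) y = act (indicator (A j)) (g j)" if "j \<le> Suc k" for j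
  proof (cases "j = Suc k")
    case True
    then show ?thesis
      using A by (simp add: y_def act_indicator_concat act_indicator_empty)
  next
    case False
    then have "A j \<inter> A (Suc k) = {}" "A j - A (Suc k) = A j"
      using disj by (auto simp: disjoint_family_on_def)
    then show ?thesis
      using A x(2) False that by (simp add: y_def act_indicator_concat act_indicator_empty)
  qed
  moreover have "y \<in> G"
    unfolding y_def using L0_convex_indicator_concat G g x(1) A by blast
  ultimately show ?case by blast
qed

end

lemma L0_convex_Inter: "(\<And>S. S \<in> F \<Longrightarrow> L0_convex M act S) \<Longrightarrow> L0_convex M act (\<Inter>F)"
  unfolding L0_convex_def by blast

definition is_eps_lambda_nbhd :: "'a measure \<Rightarrow> ('e::ab_group_add \<Rightarrow> 'a \<Rightarrow> real) set \<Rightarrow> 'e \<Rightarrow> 'e set \<Rightarrow> bool" where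
  "is_eps_lambda_nbhd M Ps x S \<longleftrightarrow> (\<exists>Q \<epsilon> lam.
      finite Q \<and> Q \<noteq> {} \<and> Q \<subseteq> Ps \<and> 0 < \<epsilon> \<and> 0 < lam \<and> lam < 1 \<and>
      eps_lambda_nbhd M Q x \<epsilon> lam \<subseteq> S)"

lemma is_eps_lambda_nbhd_mono:
  "is_eps_lambda_nbhd M Ps x S \<Longrightarrow> S \<subseteq> T \<Longrightarrow> is_eps_lambda_nbhd M Ps x T"
  unfolding is_eps_lambda_nbhd_def by (meson order_trans)

context
  fixes M :: "'a measure" and Ps :: "('e::ab_group_add \<Rightarrow> 'a \<Rightarrow> real) set"
  assumes finite: "finite_measure M"
    and measurable: "\<And>N x. N \<in> Ps \<Longrightarrow> N x \<in> borel_measurable M"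
begin

lemma eps_lambda_nbhd_antimono:
  assumes "finite Q'" "Q \<subseteq> Q'" "Q \<noteq> {}" "Q' \<subseteq> Ps" "\<epsilon>' \<le> \<epsilon>" "lam' \<le> lam"
  shows "eps_lambda_nbhd M Q' x \<epsilon>' lam' \<subseteq> eps_lambda_nbhd M Q x \<epsilon> lam"
proof
  fix y assume y: "y \<in> eps_lambda_nbhd M Q' x \<epsilon>' lam'"
  have "finite Q" using assms finite_subset by blast
  then have le: "seminorm_max Q (y - x) \<omega> \<le> seminorm_max Q' (y - x) \<omega>" for \<omega>
    unfolding seminorm_max_def using assms by (intro Max_mono) auto
  have sub: "{\<omega> \<in> space M. seminorm_max Q' (y - x) \<omega> < \<epsilon>'}
      \<subseteq> {\<omega> \<in> space M. seminorm_max Q (y - x) \<omega> < \<epsilon>}"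
    using le \<open>\<epsilon>' \<le> \<epsilon>\<close> by (smt (verit) mem_Collect_eq subsetI)
  have "seminorm_max Q (y - x) \<in> borel_measurable M"
    unfolding seminorm_max_def
    using \<open>finite Q\<close> assms measurable by (intro borel_measurable_Max) auto
  then have "{\<omega> \<in> space M. seminorm_max Q (y - x) \<omega> < \<epsilon>} \<in> sets M"
    by simp
  with sub have "measure M {\<omega> \<in> space M. seminorm_max Q' (y - x) \<omega> < \<epsilon>'}
      \<le> measure M {\<omega> \<in> space M. seminorm_max Q (y - x) \<omega> < \<epsilon>}"
    by (rule finite_measure.finite_measure_mono[OF finite])
  then show "y \<in> eps_lambda_nbhd M Q x \<epsilon> lam"
    using y \<open>lam' \<le> lam\<close> unfolding eps_lambda_nbhd_def by simp
qed

lemma is_eps_lambda_nbhd_Int: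
  assumes "is_eps_lambda_nbhd M Ps x S" "is_eps_lambda_nbhd M Ps x T"
  shows "is_eps_lambda_nbhd M Ps x (S \<inter> T)"
proof -
  obtain Q1 \<epsilon>1 lam1 where 1: "finite Q1" "Q1 \<noteq> {}" "Q1 \<subseteq> Ps" "0 < \<epsilon>1" "0 < lam1" "lam1 < 1"
    "eps_lambda_nbhd M Q1 x \<epsilon>1 lam1 \<subseteq> S"
    using assms(1) unfolding is_eps_lambda_nbhd_def by blast
  obtain Q2 \<epsilon>2 lam2 where 2: "finite Q2" "Q2 \<noteq> {}" "Q2 \<subseteq> Ps" "0 < \<epsilon>2" "0 < lam2" "lam2 < 1"
    "eps_lambda_nbhd M Q2 x \<epsilon>2 lam2 \<subseteq> T"
    using assms(2) unfolding is_eps_lambda_nbhd_def by blast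
  have "eps_lambda_nbhd M (Q1 \<union> Q2) x (min \<epsilon>1 \<epsilon>2) (min lam1 lam2) \<subseteq> S \<inter> T"
    using eps_lambda_nbhd_antimono[of "Q1 \<union> Q2" Q1 "min \<epsilon>1 \<epsilon>2" \<epsilon>1 "min lam1 lam2" lam1 x]
      eps_lambda_nbhd_antimono[of "Q1 \<union> Q2" Q2 "min \<epsilon>1 \<epsilon>2" \<epsilon>2 "min lam1 lam2" lam2 x] 1 2
    by auto
  then show ?thesis
    unfolding is_eps_lambda_nbhd_def using 1 2
    by (intro exI[of _ "Q1 \<union> Q2"] exI[of _ "min \<epsilon>1 \<epsilon>2"] exI[of _ "min lam1 lam2"]) auto
qed

lemma openin_eps_lambda_topology:
  "openin (eps_lambda_topology M Ps) S \<longleftrightarrow> (\<forall>x\<in>S. is_eps_lambda_nbhd M Ps x S)"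
proof -
  have "istopology (\<lambda>S. \<forall>x\<in>S. is_eps_lambda_nbhd M Ps x S)"
    unfolding istopology_def
    by (meson IntD1 IntD2 Sup_upper Union_iff is_eps_lambda_nbhd_Int is_eps_lambda_nbhd_mono)
  then show ?thesis
    unfolding eps_lambda_topology_def is_eps_lambda_nbhd_def[symmetric]
    by (simp add: topology_inverse')
qed

lemma topspace_eps_lambda_topology:
  assumes "Ps \<noteq> {}"
  shows "topspace (eps_lambda_topology M Ps) = UNIV"
proof -
  obtain N where "N \<in> Ps" using assms by blast
  then have "is_eps_lambda_nbhd M Ps x UNIV" for x
    unfolding is_eps_lambda_nbhd_def
    by (intro exI[of _ "{N}"] exI[of _ 1] exI[of _ "1/2"]) auto
  then have "openin (eps_lambda_topology M Ps) UNIV"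
    by (simp add: openin_eps_lambda_topology)
  then show ?thesis
    using openin_subset by blast
qed

end

lemma (in prob_space) exists_prob_gt_pos:
  fixes f :: "'a \<Rightarrow> real"
  assumes f: "f \<in> borel_measurable M" and not_nonpos: "\<not> (AE \<omega> in M. f \<omega> \<le> 0)"
  shows "\<exists>\<delta>>0. 0 < prob {\<omega> \<in> space M. \<delta> < f \<omega>}"
proof (rule ccontr)
  assume "\<not> ?thesis"
  then have "prob {\<omega> \<in> space M. \<delta> < f \<omega>} = 0" if "\<delta> > 0" for \<delta>
    using that measure_nonneg[of M] by (meson linorder_not_less order_antisym)
  then have "AE \<omega> in M. \<not> inverse (real (Suc n)) < f \<omega>" for n
    using f by (simp add: prob_eq_0)
  then have "AE \<omega> in M. f \<omega> \<le> inverse (real (Suc n))" for n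
    by (simp add: not_less)
  then have "AE \<omega> in M. \<forall>n. f \<omega> \<le> inverse (real (Suc n))"
    by (simp add: AE_all_countable)
  then have "AE \<omega> in M. f \<omega> \<le> 0"
  proof eventually_elim
    case (elim \<omega>)
    show ?case
    proof (rule ccontr)
      assume "\<not> f \<omega> \<le> 0"
      then obtain n :: nat where "0 < n" "inverse (real n) < f \<omega>"
        using ex_inverse_of_nat_less[of "f \<omega>"] by auto
      moreover have "f \<omega> \<le> inverse (real (Suc (n - 1)))"
        using elim by blast
      ultimately show False
        by simp
    qed
  qed
  with not_nonpos show False ..
qed

lemma seminorm_act_indicator_le:
  fixes act :: "('a \<Rightarrow> 'k::real_normed_field) \<Rightarrow> 'e::ab_group_add \<Rightarrow> 'e"
  assumes "L0_seminorm M act N" "A \<in> sets M"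
  shows "AE \<omega> in M. N (act (indicator A) x) \<omega> \<le> N x \<omega>"
proof -
  have "AE \<omega> in M. N (act (indicator A) x) \<omega> = norm (indicator A \<omega> :: 'k) * N x \<omega>"
    "AE \<omega> in M. 0 \<le> N x \<omega>"
    using assms unfolding L0_seminorm_def by simp_all
  then show ?thesis
    by eventually_elim (simp add: indicator_def)
qed

lemma is_eps_lambda_nbhd_indicator_fiber_compl:
  fixes act :: "('a \<Rightarrow> 'k::real_normed_field) \<Rightarrow> 'e::ab_group_add \<Rightarrow> 'e"
  assumes R: "RLC_module M act Ps" and B: "B \<in> sets M"
    and x: "act (indicator B) x \<noteq> act (indicator B) c"
  shows "is_eps_lambda_nbhd M Ps x {y. act (indicator B) y \<noteq> act (indicator B) c}"
proof -
  interpret prob_space M using R by (simp add: RLC_module_def)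
  have module: "L0_module M act" and seminorms: "\<And>N. N \<in> Ps \<Longrightarrow> L0_seminorm M act N"
    using R by (auto simp: RLC_module_def)
  define z where "z = act (indicator B) c - act (indicator B) x"
  have "z \<noteq> 0" using x by (simp add: z_def)
  then obtain N where N: "N \<in> Ps" and nonzero: "\<not> (AE \<omega> in M. N z \<omega> = 0)"
    using R by (auto simp: RLC_module_def)
  have nonneg: "AE \<omega> in M. 0 \<le> N z \<omega>" and Nz: "N z \<in> borel_measurable M"
    using seminorms[OF N] by (auto simp: L0_seminorm_def)
  have "\<not> (AE \<omega> in M. N z \<omega> \<le> 0)"
  proof
    assume "AE \<omega> in M. N z \<omega> \<le> 0"
    with nonneg have "AE \<omega> in M. N z \<omega> = 0"
      by eventually_elim simp
    with nonzero show False ..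
  qed
  then obtain \<delta> where \<delta>: "0 < \<delta>" and p_pos: "0 < prob {\<omega> \<in> space M. \<delta> < N z \<omega>}"
    using exists_prob_gt_pos Nz by blast
  define p where "p = prob {\<omega> \<in> space M. \<delta> < N z \<omega>}"
  have large: "{\<omega> \<in> space M. \<delta> < N z \<omega>} \<in> sets M"
    using Nz by measurable
  have avoid: "eps_lambda_nbhd M {N} x \<delta> (p / 2) \<subseteq> {y. act (indicator B) y \<noteq> act (indicator B) c}"
  proof (intro subsetI CollectI notI)
    fix y assume y: "y \<in> eps_lambda_nbhd M {N} x \<delta> (p / 2)"
      and fiber: "act (indicator B) y = act (indicator B) c"
    have "z = act (indicator B) (y - x)"
      using B by (simp add: z_def fiber act_diff_right[OF module])
    then have "AE \<omega> in M. N z \<omega> \<le> N (y - x) \<omega>"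
      using seminorm_act_indicator_le[OF seminorms[OF N] B] by simp
    then have "AE \<omega> in M. \<omega> \<in> {\<omega> \<in> space M. N (y - x) \<omega> < \<delta>}
        \<longrightarrow> \<omega> \<in> space M - {\<omega> \<in> space M. \<delta> < N z \<omega>}"
      by eventually_elim auto
    then have "prob {\<omega> \<in> space M. N (y - x) \<omega> < \<delta>}
        \<le> prob (space M - {\<omega> \<in> space M. \<delta> < N z \<omega>})"
      using large by (intro finite_measure_mono_AE) auto
    also have "\<dots> = 1 - p"
      using large by (simp add: p_def prob_compl)
    finally have "prob {\<omega> \<in> space M. N (y - x) \<omega> < \<delta>} \<le> 1 - p" .
    moreover have "1 - p / 2 < prob {\<omega> \<in> space M. N (y - x) \<omega> < \<delta>}"
      using y by (simp add: eps_lambda_nbhd_def seminorm_max_def)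
    ultimately show False
      using p_pos by (simp add: p_def)
  qed
  have "p / 2 < 1"
    using prob_le_1[of "{\<omega> \<in> space M. \<delta> < N z \<omega>}"] unfolding p_def by linarith
  with N \<delta> p_pos have "finite {N} \<and> {N} \<noteq> {} \<and> {N} \<subseteq> Ps \<and> 0 < \<delta> \<and> 0 < p / 2 \<and> p / 2 < 1"
    by (simp add: p_def)
  with avoid show ?thesis
    unfolding is_eps_lambda_nbhd_def by blast
qed

lemma closedin_indicator_fiber:
  fixes act :: "('a \<Rightarrow> 'k::real_normed_field) \<Rightarrow> 'e::ab_group_add \<Rightarrow> 'e"
  assumes R: "RLC_module M act Ps" and "Ps \<noteq> {}" "B \<in> sets M"
  shows "closedin (eps_lambda_topology M Ps) {x. act (indicator B) x = act (indicator B) c}"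
proof -
  have finite: "finite_measure M" and measurable: "\<And>N x. N \<in> Ps \<Longrightarrow> N x \<in> borel_measurable M"
    using R by (auto simp: RLC_module_def L0_seminorm_def prob_space_def)
  have "openin (eps_lambda_topology M Ps) {x. act (indicator B) x \<noteq> act (indicator B) c}"
    using is_eps_lambda_nbhd_indicator_fiber_compl[OF R \<open>B \<in> sets M\<close>]
    by (subst openin_eps_lambda_topology) (use finite measurable in auto)
  moreover have "topspace (eps_lambda_topology M Ps) = UNIV"
    by (rule topspace_eps_lambda_topology) (use finite measurable \<open>Ps \<noteq> {}\<close> in auto)
  ultimately show ?thesis
    by (simp add: closedin_def Compl_eq_Diff_UNIV[symmetric] Collect_neg_eq)
qed

lemma decseq_finite_Inter_nonempty:
  assumes "decseq C" "\<And>k. C k \<noteq> {}" "F \<subseteq> range C" "finite F"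
  shows "\<Inter>F \<noteq> {}"
proof -
  obtain K where K: "finite K" "F = C ` K"
    using assms(3,4) finite_subset_image by metis
  show ?thesis
  proof (cases "K = {}")
    case False
    have "C (Max K) \<subseteq> C k" if "k \<in> K" for k
      using that K(1) assms(1) by (simp add: decseq_def)
    then have "C (Max K) \<subseteq> \<Inter>F"
      using K(2) by blast
    then show ?thesis
      using assms(2) by blast
  qed (use K in simp)
qed

lemma RLC_module_trivial:
  fixes act :: "('a \<Rightarrow> 'k::real_normed_field) \<Rightarrow> 'e::ab_group_add \<Rightarrow> 'e"
  assumes "RLC_module M act {}"
  shows "x = (0 :: 'e)"
  using assms unfolding RLC_module_def by blast

lemma L0_convexly_compact_concatenation:
  fixes act :: "('a \<Rightarrow> 'k::real_normed_field) \<Rightarrow> 'e::ab_group_add \<Rightarrow> 'e"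
    and g :: "nat \<Rightarrow> 'e" and A :: "nat \<Rightarrow> 'a set"
  assumes R: "RLC_module M act Ps" and "Ps \<noteq> {}"
    and compact: "L0_convexly_compact M act (eps_lambda_topology M Ps) G"
    and g: "\<forall>n. g n \<in> G" and A: "\<forall>n. A n \<in> sets M" and disj: "disjoint_family A"
  shows "\<exists>g0\<in>G. \<forall>n. act (indicator (A n)) g0 = act (indicator (A n)) (g n)"
proof -
  have module: "L0_module M act"
    using R by (simp add: RLC_module_def)
  have convex: "L0_convex M act G"
    using compact by (simp add: L0_convexly_compact_def)
  define fiber where "fiber j = {x. act (indicator (A j)) x = act (indicator (A j)) (g j)}" for j
  define C where "C k = \<Inter>(insert G (fiber ` {..k}))" for k
  have "C k \<subseteq> G \<and> L0_convex M act (C k)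
      \<and> closedin (subtopology (eps_lambda_topology M Ps) G) (C k)" for k
  proof (intro conjI)
    show "L0_convex M act (C k)"
      unfolding C_def fiber_def
      using convex L0_convex_indicator_fiber[OF module] A by (intro L0_convex_Inter) auto
    have "closedin (eps_lambda_topology M Ps) (\<Inter>j\<le>k. fiber j)"
      unfolding fiber_def using closedin_indicator_fiber[OF R \<open>Ps \<noteq> {}\<close>] A by auto
    then show "closedin (subtopology (eps_lambda_topology M Ps) G) (C k)"
      unfolding C_def by (simp add: closedin_subtopology_Int_closed)
  qed (auto simp: C_def)
  then have "\<forall>C'\<in>range C. C' \<subseteq> G \<and> L0_convex M act C'
      \<and> closedin (subtopology (eps_lambda_topology M Ps) G) C'"
    by blast
  moreover have "\<forall>F. F \<subseteq> range C \<longrightarrow> finite F \<longrightarrow> F \<noteq> {} \<longrightarrow> \<Inter>F \<noteq> {}"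
  proof (intro allI impI)
    fix F :: "'e set set" assume "F \<subseteq> range C" "finite F"
    moreover have "decseq C"
      by (auto simp: decseq_def C_def)
    moreover have "C k \<noteq> {}" for k
      using L0_convex_finite_concatenation[OF module convex g A disj, of k]
      by (auto simp: C_def fiber_def)
    ultimately show "\<Inter>F \<noteq> {}"
      using decseq_finite_Inter_nonempty by blast
  qed
  ultimately have "\<Inter>(range C) \<noteq> {}"
    using compact[unfolded L0_convexly_compact_def, THEN conjunct2, rule_format, of "range C"]
    by blast
  then obtain g0 where "\<And>k. g0 \<in> C k"
    by blast
  then show ?thesis
    by (auto simp: C_def fiber_def)
qed

theorem proposition4p1:
  fixes M :: "'a measure"
    and act :: "('a \<Rightarrow> 'k::real_normed_field) \<Rightarrow> 'e::ab_group_add \<Rightarrow> 'e"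
    and Ps :: "('e \<Rightarrow> 'a \<Rightarrow> real) set"
    and G :: "'e set"
  assumes "RLC_module M act Ps"
    and "G \<noteq> {}"
    and "L0_convex M act G"
    and "L0_convexly_compact M act (eps_lambda_topology M Ps) G"
  shows "countable_concatenation_property M act G"
  unfolding countable_concatenation_property_def
proof (intro allI impI)
  fix g :: "nat \<Rightarrow> 'e" and A :: "nat \<Rightarrow> 'a set"
  assume g: "\<forall>n. g n \<in> G" and A: "\<forall>n. A n \<in> sets M" and disj: "disjoint_family A"
  show "\<exists>g0\<in>G. \<forall>n. act (indicator (A n)) g0 = act (indicator (A n)) (g n)"
  proof (cases "Ps = {}")
    case True
    with assms(1) have "\<And>x y :: 'e. x = y"
      using RLC_module_trivial by metis
    with \<open>G \<noteq> {}\<close> show ?thesis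
      by blast
  next
    case False
    show ?thesis
      by (rule L0_convexly_compact_concatenation[OF assms(1) False assms(4) g A disj])
  qed
qed

end
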